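(* Consider the following binary deterministic control system with parameters $a'=2$, $\sigma_{v2}'=1$, $p_1'=1$. For $n\ge 0$ and $i\in\mathbb Z$: $x^{n+1}_i=x^n_{i-a'}\oplus u^n_{1,i}\oplus u^n_{2,i}\oplus w^n_i$, $y^n_{1,i}=x^n_i$, $y^n_{2,i}=x^n_i\oplus v^n_i$, with $x^0_i=0$ for all $i$. For every $n$, $w^n_i=0$ for $i\ge 0$ and $(w^n_i)_{i<0}$ are i.i.d. Bernoulli$(1/2)$ on $\{0,1\}$; $v^n_i=0$ for $i\ge\sigma_{v2}'$ and $(v^n_i)_{i<\sigma_{v2}'}$ are i.i.d. Bernoulli$(1/2)$; all the $w$'s and $v$'s (over all $n,i$) are independent. The sequence $u^n_1=(u^n_{1,i})_i$ is a function of $y^0_1,\dots,y^n_1$ and $u^n_2$ is a function of $y^0_2,\dots,y^n_2$, and the first controller satisfies $u^n_{1,i}=0$ for all $n\ge 0$ and all $i\ge p_1'$. Call $d$ an achieved distortion level if $x^n_i=0$ for all $i\ge d$ and all $n\ge 0$ with probability $1$. Then for every admissible pair of controllers, every achieved distortion level satisfies $d\ge 2$; i.e., the minimum achievable $d$ is at least $2$.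
   Context: $\oplus$ denotes addition modulo 2 (XOR). Binary sequences $(x_i)_{i\in\mathbb Z}$ model binary expansions, index $i$ being the coefficient of $2^i$; the shift $x_{i-a'}$ models multiplication by $2^{a'}$. *)

theory Defs
  imports "HOL-Probability.Probability"
begin

text \<open>Binary sequences indexed by \<open>int\<close>; bit value 1 is True, 0 is False,
  and XOR is \<open>\<noteq>\<close> on bool. Parameters fixed: a' = 2, sigma_v2' = 1, p_1' = 1.\<close>

text \<open>Sample space: one fair coin for each coordinate (False,n,i) (raw w-noise)
  and (True,n,i) (raw v-noise); all coordinates i.i.d. Bernoulli(1/2).\<close>
type_synonym noise = "bool \<times> nat \<times> int \<Rightarrow> bool"

definition noise_measure :: "noise measure" where
  "noise_measure = PiM UNIV (\<lambda>_. measure_pmf (bernoulli_pmf (1/2)))"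

definition wn :: "noise \<Rightarrow> nat \<Rightarrow> int \<Rightarrow> bool" where
  "wn \<omega> n i = (i < 0 \<and> \<omega> (False, n, i))"

definition vn :: "noise \<Rightarrow> nat \<Rightarrow> int \<Rightarrow> bool" where
  "vn \<omega> n i = (i < 1 \<and> \<omega> (True, n, i))"

text \<open>Controllers: \<open>u n hist\<close> gives the control sequence u^n from the observation
  history [y^0, ..., y^n].  \<open>xhist u1 u2 \<omega> n = [x^0, ..., x^n]\<close>.\<close>
fun xhist :: "(nat \<Rightarrow> (int \<Rightarrow> bool) list \<Rightarrow> int \<Rightarrow> bool)
    \<Rightarrow> (nat \<Rightarrow> (int \<Rightarrow> bool) list \<Rightarrow> int \<Rightarrow> bool)
    \<Rightarrow> noise \<Rightarrow> nat \<Rightarrow> (int \<Rightarrow> bool) list" where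
  "xhist u1 u2 \<omega> 0 = [(\<lambda>i. False)]"
| "xhist u1 u2 \<omega> (Suc n) =
     (let h = xhist u1 u2 \<omega> n;
          y1 = h;
          y2 = map (\<lambda>k. \<lambda>i. (h ! k) i \<noteq> vn \<omega> k i) [0..<Suc n]
      in h @ [(\<lambda>i. ((h ! n) (i - 2) \<noteq> u1 n y1 i) \<noteq> (u2 n y2 i \<noteq> wn \<omega> n i))])"

definition xstate :: "(nat \<Rightarrow> (int \<Rightarrow> bool) list \<Rightarrow> int \<Rightarrow> bool)
    \<Rightarrow> (nat \<Rightarrow> (int \<Rightarrow> bool) list \<Rightarrow> int \<Rightarrow> bool)
    \<Rightarrow> noise \<Rightarrow> nat \<Rightarrow> int \<Rightarrow> bool" where
  "xstate u1 u2 \<omega> n = xhist u1 u2 \<omega> n ! n"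

end

theory Submission
  imports Defs
begin

text \<open>Flip the two noise bits w^0_{-1} and v^1_{-1} together. The first flips
  x^1_{-1}; the second compensates for this in y^1_{2,-1}, so the second controller sees
  exactly the same observations, while the first controller cannot act at position 1.
  Since the shift by a' = 2 carries x^1_{-1} to x^2_1, the flip negates x^2_1. It also
  preserves the fair-coin product measure, so x^2_1 cannot vanish almost surely, and no
  d \<le> 1 is achieved.\<close>

lemma length_xhist: "length (xhist u1 u2 \<omega> n) = Suc n"
  by (induction n) (simp_all add: Let_def)

lemma xhist_eq_map_xstate: "xhist u1 u2 \<omega> n = map (xstate u1 u2 \<omega>) [0..<Suc n]"
proof (induction n)
  case 0
  then show ?case by (simp add: xstate_def)
next
  case (Suc n)
  have "xhist u1 u2 \<omega> (Suc n) = xhist u1 u2 \<omega> n @ [xstate u1 u2 \<omega> (Suc n)]"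
    by (simp add: xstate_def Let_def nth_append length_xhist)
  then show ?case using Suc.IH by simp
qed

lemma xstate_0: "xstate u1 u2 \<omega> 0 = (\<lambda>i. False)"
  by (simp add: xstate_def)

lemma xstate_Suc:
  "xstate u1 u2 \<omega> (Suc n) i =
     ((xstate u1 u2 \<omega> n (i - 2) \<noteq> u1 n (map (xstate u1 u2 \<omega>) [0..<Suc n]) i)
      \<noteq> (u2 n (map (\<lambda>k i. xstate u1 u2 \<omega> k i \<noteq> vn \<omega> k i) [0..<Suc n]) i \<noteq> wn \<omega> n i))"
proof -
  have y2: "map (\<lambda>k i. (map (xstate u1 u2 \<omega>) [0..<Suc n] ! k) i \<noteq> vn \<omega> k i) [0..<Suc n]
      = map (\<lambda>k i. xstate u1 u2 \<omega> k i \<noteq> vn \<omega> k i) [0..<Suc n]"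
    by (intro map_cong refl) (simp del: upt_Suc)
  show ?thesis
    unfolding xstate_def [of _ _ _ "Suc n"] xhist.simps Let_def xhist_eq_map_xstate [of _ _ _ n] y2
    by (simp add: nth_append del: upt_Suc)
qed

lemma map_pmf_Not_bernoulli:
  assumes "0 \<le> p" "p \<le> 1"
  shows "map_pmf Not (bernoulli_pmf p) = bernoulli_pmf (1 - p)"
proof (rule pmf_eqI)
  fix b :: bool
  have "Not -` {b} = {\<not> b}" by auto
  then show "pmf (map_pmf Not (bernoulli_pmf p)) b = pmf (bernoulli_pmf (1 - p)) b"
    using assms by (cases b) (simp_all add: pmf_map measure_pmf_single)
qed

lemma distr_PiM_pmf_coordinatewise:
  fixes p :: "'a pmf" and f :: "'i \<Rightarrow> 'a \<Rightarrow> 'a"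
  assumes f: "\<And>j. map_pmf (f j) p = p"
  shows "distr (PiM UNIV (\<lambda>_. measure_pmf p)) (PiM UNIV (\<lambda>_. measure_pmf p)) (\<lambda>\<omega> j. f j (\<omega> j))
       = PiM UNIV (\<lambda>_. measure_pmf p)" (is "distr ?P ?P ?T = ?P")
proof (rule measure_eqI_PiM_infinite[symmetric, OF refl])
  interpret prob_space ?P
    by (intro prob_space_PiM) (auto simp: measure_pmf.prob_space_axioms)
  show "finite_measure ?P" by unfold_locales
  have "(\<lambda>\<omega>. f j (\<omega> j)) \<in> ?P \<rightarrow>\<^sub>M measure_pmf p" for j
    by (rule measurable_compose[OF measurable_component_singleton]) simp_all
  then have T: "?T \<in> ?P \<rightarrow>\<^sub>M ?P"
    by (intro measurable_PiM_single') (auto simp: space_PiM)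
  show "sets (distr ?P ?P ?T) = sets ?P" by simp
  fix A and J :: "'i set" assume J: "finite J" and A: "\<And>j. j \<in> J \<Longrightarrow> A j \<in> sets (measure_pmf p)"
  let ?emb = "prod_emb UNIV (\<lambda>_. measure_pmf p) J"
  have "?P (?emb (Pi\<^sub>E J A)) = (\<Prod>j\<in>J. measure_pmf p (A j))"
    using J by (intro emeasure_PiM_emb) (auto simp: measure_pmf.prob_space_axioms)
  also have "\<dots> = (\<Prod>j\<in>J. measure_pmf p (f j -` A j))"
    by (intro prod.cong refl) (metis emeasure_map_pmf f)
  also have "\<dots> = ?P (?emb (Pi\<^sub>E J (\<lambda>j. f j -` A j)))"
    using J by (intro emeasure_PiM_emb[symmetric]) (auto simp: measure_pmf.prob_space_axioms)
  also have "?emb (Pi\<^sub>E J (\<lambda>j. f j -` A j)) = ?T -` ?emb (Pi\<^sub>E J A) \<inter> space ?P"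
    by (auto simp: prod_emb_def space_PiM PiE_iff)
  also have "?P \<dots> = distr ?P ?P ?T (?emb (Pi\<^sub>E J A))"
    using J A T by (intro emeasure_distr[symmetric] sets_PiM_I) auto
  finally show "?P (?emb (Pi\<^sub>E J A)) = distr ?P ?P ?T (?emb (Pi\<^sub>E J A))" .
qed

lemma not_AE_if_measure_preserving_negates:
  assumes "prob_space M" and T: "T \<in> M \<rightarrow>\<^sub>M M" "distr M M T = M"
    and negates: "\<And>\<omega>. \<omega> \<in> space M \<Longrightarrow> P (T \<omega>) = (\<not> P \<omega>)"
  shows "\<not> (AE \<omega> in M. P \<omega>)"
proof
  assume P: "AE \<omega> in M. P \<omega>"
  then have "AE \<omega> in distr M M T. P \<omega>"
    by (simp only: T(2))
  then have "AE \<omega> in M. P (T \<omega>)"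
    by (rule AE_distrD[OF T(1)])
  with P AE_space have "AE \<omega> in M. False"
    by eventually_elim (use negates in auto)
  then show False
    using prob_space.AE_False[OF \<open>prob_space M\<close>] by blast
qed

definition flip_noise :: "(bool \<times> nat \<times> int) set \<Rightarrow> noise \<Rightarrow> noise" where
  "flip_noise S \<omega> j = (if j \<in> S then \<not> \<omega> j else \<omega> j)"

lemma prob_space_noise_measure: "prob_space noise_measure"
  unfolding noise_measure_def
  by (intro prob_space_PiM) (auto simp: measure_pmf.prob_space_axioms)

lemma flip_noise_measurable: "flip_noise S \<in> noise_measure \<rightarrow>\<^sub>M noise_measure"
  unfolding noise_measure_def
  by (rule measurable_PiM_single') (auto simp: space_PiM flip_noise_def)

lemma distr_flip_noise: "distr noise_measure noise_measure (flip_noise S) = noise_measure"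
proof -
  have coordinatewise: "flip_noise S = (\<lambda>\<omega> j. (if j \<in> S then Not else id) (\<omega> j))"
    by (auto simp: flip_noise_def fun_eq_iff)
  have "map_pmf (if j \<in> S then Not else id) (bernoulli_pmf (1/2)) = bernoulli_pmf (1/2)"
    for j
    using map_pmf_Not_bernoulli[of "1/2"] by simp
  then show ?thesis
    unfolding noise_measure_def coordinatewise by (rule distr_PiM_pmf_coordinatewise)
qed

lemma xstate_2_1:
  assumes "\<forall>n h i. i \<ge> 1 \<longrightarrow> \<not> u1 n h i"
  shows "xstate u1 u2 \<omega> 2 1 =
    (xstate u1 u2 \<omega> 1 (-1) \<noteq> u2 1 [vn \<omega> 0, \<lambda>i. xstate u1 u2 \<omega> 1 i \<noteq> vn \<omega> 1 i] 1)"
  using xstate_Suc[of u1 u2 \<omega> 1 1] assms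
  by (simp add: numeral_2_eq_2 xstate_0 wn_def upt_conv_Cons)

definition critical_coords :: "(bool \<times> nat \<times> int) set" where
  "critical_coords = {(False, 0, -1), (True, 1, -1)}"

lemma xstate_2_1_flip_noise:
  assumes "\<forall>n h i. i \<ge> 1 \<longrightarrow> \<not> u1 n h i"
  shows "xstate u1 u2 (flip_noise critical_coords \<omega>) 2 1 = (\<not> xstate u1 u2 \<omega> 2 1)"
proof -
  let ?\<omega>' = "flip_noise critical_coords \<omega>"
  have vn_0: "vn ?\<omega>' 0 = vn \<omega> 0"
    by (auto simp: vn_def flip_noise_def critical_coords_def)
  have xstate_1: "xstate u1 u2 ?\<omega>' 1 i = ((i = -1) \<noteq> xstate u1 u2 \<omega> 1 i)" for i
    using xstate_Suc[of u1 u2 ?\<omega>' 0 i] xstate_Suc[of u1 u2 \<omega> 0 i]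
    by (simp add: vn_0 xstate_0) (simp add: wn_def flip_noise_def critical_coords_def)
  have y2_1: "(\<lambda>i. xstate u1 u2 ?\<omega>' 1 i \<noteq> vn ?\<omega>' 1 i) = (\<lambda>i. xstate u1 u2 \<omega> 1 i \<noteq> vn \<omega> 1 i)"
    unfolding xstate_1 by (auto simp: vn_def flip_noise_def critical_coords_def)
  show ?thesis
    unfolding xstate_2_1[OF assms] vn_0 y2_1 xstate_1[of "-1"] by simp
qed

theorem proposition1:
  fixes u1 u2 :: "nat \<Rightarrow> (int \<Rightarrow> bool) list \<Rightarrow> int \<Rightarrow> bool" and d :: int
  assumes "\<forall>n h i. i \<ge> 1 \<longrightarrow> \<not> u1 n h i"
    and "AE \<omega> in noise_measure. \<forall>n. \<forall>i\<ge>d. \<not> xstate u1 u2 \<omega> n i"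
  shows "d \<ge> 2"
proof (rule ccontr)
  assume "\<not> d \<ge> 2"
  from assms(2) have "AE \<omega> in noise_measure. \<not> xstate u1 u2 \<omega> 2 1"
    by eventually_elim (use \<open>\<not> d \<ge> 2\<close> in auto)
  moreover have "\<not> (AE \<omega> in noise_measure. \<not> xstate u1 u2 \<omega> 2 1)"
    by (rule not_AE_if_measure_preserving_negates[OF prob_space_noise_measure
          flip_noise_measurable[where S = critical_coords] distr_flip_noise])
      (simp add: xstate_2_1_flip_noise[OF assms(1)])
  ultimately show False by contradiction
qed

end
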